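(* There exists an absolute constant $C_0>0$ such that for every increasing function $F:\mathbb{N}\to\mathbb{N}$ there exist functions $d,r:\mathbb{N}\to\mathbb{N}$ such that: $d$ is nondecreasing and takes only prime values at least $5$; $d(n)\ge2r(n)+1$, $r(n)\ge n$, $d(n)-2r(n)\ge n$ and $3r(n)\le d(n)$ for all $n$; $r$ is strictly increasing; and, with $G=\langle S\rangle$, $S=\{\alpha,\beta\}$, where $\alpha=(\alpha_n)_n,\beta=(\beta_n)_n\in\prod_n\mathrm{Alt}(d(n))$, $\alpha_n=(1\;2\;\cdots\;d(n))$, $\beta_n=(1\;(1+r(n))\;(1+2r(n)))$, we have $\mathcal{R}_G^S(n)\ge F(n)$ for all $n\ge C_0$.
   Context: $\mathbb{N}=\{1,2,\dots\}$. $B_S(l)$ is the ball of radius $l$ about $e$ in the word metric of $S$. $\mathcal{R}_G^S(l)$ (full residual finiteness growth) is the minimal order of a finite group $\Delta$ admitting a homomorphism $G\to\Delta$ whose restriction to $B_S(l)$ is injective. *)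

theory Defs
  imports "HOL-Algebra.Algebra" "HOL-Combinatorics.Permutations" "HOL-Computational_Algebra.Primes"
begin

definition word_ball :: "('a, 'b) monoid_scheme \<Rightarrow> 'a set \<Rightarrow> nat \<Rightarrow> 'a set" where
  "word_ball G S l =
     {foldr (\<otimes>\<^bsub>G\<^esub>) ws \<one>\<^bsub>G\<^esub> | ws. length ws \<le> l \<and> set ws \<subseteq> S \<union> (\<lambda>x. inv\<^bsub>G\<^esub> x) ` S}"

text \<open>Finite groups are represented (up to
  isomorphism, which loses nothing) by groups whose carrier is a set of naturals.\<close>
definition full_rf_growth :: "('a, 'b) monoid_scheme \<Rightarrow> 'a set \<Rightarrow> nat \<Rightarrow> nat" where
  "full_rf_growth G S l =
     (LEAST k. \<exists>(\<Delta> :: nat monoid) h. group \<Delta> \<and> finite (carrier \<Delta>) \<and> card (carrier \<Delta>) = k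
                 \<and> h \<in> hom G \<Delta> \<and> inj_on h (word_ball G S l))"

text \<open>The product group prod_{n>=1} Alt(d(n)), Alt(d) acting on {1..d}. Index 0 is a dummy
  coordinate forced to be the identity (N = {1,2,...}).\<close>
definition Alt_prod :: "(nat \<Rightarrow> nat) \<Rightarrow> (nat \<Rightarrow> nat \<Rightarrow> nat) monoid" where
  "Alt_prod d = \<lparr> carrier = {f. f 0 = id \<and> (\<forall>n\<ge>1. f n permutes {1..d n} \<and> evenperm (f n))},
                 monoid.mult = (\<lambda>f g. \<lambda>n. f n \<circ> g n),
                 one = (\<lambda>n. id) \<rparr>"

definition cycle_perm :: "nat \<Rightarrow> nat \<Rightarrow> nat" where
  "cycle_perm d = (\<lambda>i. if 1 \<le> i \<and> i < d then i + 1 else if i = d then 1 else i)"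

definition three_cycle :: "nat \<Rightarrow> nat \<Rightarrow> nat \<Rightarrow> nat \<Rightarrow> nat" where
  "three_cycle a b c = (\<lambda>i. if i = a then b else if i = b then c else if i = c then a else i)"

definition alpha_el :: "(nat \<Rightarrow> nat) \<Rightarrow> nat \<Rightarrow> nat \<Rightarrow> nat" where
  "alpha_el d = (\<lambda>n. if n = 0 then id else cycle_perm (d n))"

definition beta_el :: "(nat \<Rightarrow> nat) \<Rightarrow> nat \<Rightarrow> nat \<Rightarrow> nat" where
  "beta_el r = (\<lambda>n. if n = 0 then id else three_cycle 1 (1 + r n) (1 + 2 * r n))"

definition G_grp :: "(nat \<Rightarrow> nat) \<Rightarrow> (nat \<Rightarrow> nat) \<Rightarrow> (nat \<Rightarrow> nat \<Rightarrow> nat) monoid" where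
  "G_grp d r = (Alt_prod d) \<lparr> carrier := generate (Alt_prod d) {alpha_el d, beta_el r} \<rparr>"

end

theory Submission
  imports Defs
begin

(* Fix a coordinate m and write D = d(m), R = r(m), sigma = alpha^R.  Labelling the point
   1 + uR mod D of {1..D} by u (a bijection from Z/D, as D is prime), sigma acts in coordinate m
   by u -> u + 1 and beta is the 3-cycle on the labels 0, 1, 2.  Hence the commutator z of beta
   and sigma beta sigma^-1 is the double transposition (0 3)(1 2) in coordinate m, while the
   growth conditions on d and r make it trivial in every other coordinate: sigma is trivial
   where d(n) divides R, and moves the 3-cycle of beta off itself elsewhere.  So the conjugates
   e_i = sigma^(4i) z sigma^(-4i), i < D/4, are double transpositions on disjoint blocks of
   labels.
   Let h be a homomorphism to a finite group that is injective on the ball of radius 12R + 4.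
   This ball contains z and e_1, so h z <> h e_1.  A fixed word W in conjugates of beta carries
   e_1 to z and commutes with every e_(-j) with 4j + 8 <= D; conjugating by sigma^(4k) W
   sigma^(-4k) therefore turns h z = h e_(k+1) into h z = h e_k, so h z <> h e_k for all
   0 < k < D/4, and the images of the e_i are pairwise distinct.  Thus the quotient has at
   least D/4 elements.  The sequences are built so that d(m) >= 4 F(12 r(m+1) + 4); choosing
   m maximal with 12 r(m) + 4 <= l then gives F(l) <= d(m)/4. *)

section \<open>Three-cycles, transpositions and the long cycle\<close>

lemma three_cycle_less: "a < N \<Longrightarrow> b < N \<Longrightarrow> c < N \<Longrightarrow> u < N \<Longrightarrow> three_cycle a b c u < N"
  by (simp add: three_cycle_def)

lemma three_cycle_eq_transpose_comp:
  assumes "a \<noteq> b" "b \<noteq> c" "a \<noteq> c"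
  shows "three_cycle a b c = transpose a b \<circ> transpose b c"
  using assms by (auto simp: three_cycle_def transpose_def fun_eq_iff)

lemma three_cycle_permutes:
  assumes "a \<noteq> b" "b \<noteq> c" "a \<noteq> c" "a \<in> S" "b \<in> S" "c \<in> S"
  shows "three_cycle a b c permutes S"
  unfolding three_cycle_eq_transpose_comp[OF assms(1-3)]
  by (intro permutes_compose permutes_swap_id) (use assms in auto)

lemma evenperm_three_cycle:
  assumes "a \<noteq> b" "b \<noteq> c" "a \<noteq> c"
  shows "evenperm (three_cycle a b c)"
  unfolding three_cycle_eq_transpose_comp[OF assms]
  by (subst evenperm_comp) (auto simp: permutation_swap_id evenperm_swap assms)

lemma inv_three_cycle:
  assumes "a \<noteq> b" "b \<noteq> c" "a \<noteq> c"
  shows "Hilbert_Choice.inv (three_cycle a b c) = three_cycle a c b"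
  by (rule inv_unique_comp) (use assms in \<open>auto simp: three_cycle_def fun_eq_iff\<close>)

lemma conj_three_cycle:
  assumes "bij g"
  shows "g \<circ> three_cycle a b c \<circ> Hilbert_Choice.inv g = three_cycle (g a) (g b) (g c)"
proof
  fix y
  obtain x where y: "y = g x" using assms by (metis bij_pointE)
  have "inj g" using assms bij_is_inj by auto
  then show "(g \<circ> three_cycle a b c \<circ> Hilbert_Choice.inv g) y = three_cycle (g a) (g b) (g c) y"
    unfolding y comp_def three_cycle_def by (auto dest: injD)
qed

lemma conj_double_transposition:
  assumes "bij g"
  shows "g \<circ> (transpose a b \<circ> transpose c e) \<circ> Hilbert_Choice.inv g
    = transpose (g a) (g b) \<circ> transpose (g c) (g e)"
proof
  fix y
  obtain x where y: "y = g x" using assms by (metis bij_pointE)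
  have "inj g" using assms bij_is_inj by auto
  then show "(g \<circ> (transpose a b \<circ> transpose c e) \<circ> Hilbert_Choice.inv g) y
      = (transpose (g a) (g b) \<circ> transpose (g c) (g e)) y"
    unfolding y comp_def transpose_def by (auto dest: injD)
qed

lemma comp_transpose_commute:
  assumes "inj f" "f a = a" "f b = b"
  shows "f \<circ> transpose a b = transpose a b \<circ> f"
proof
  fix y
  show "(f \<circ> transpose a b) y = (transpose a b \<circ> f) y"
  proof (cases "y = a \<or> y = b")
    case True
    then show ?thesis using assms by auto
  next
    case False
    then have "f y \<noteq> a" "f y \<noteq> b" using assms by (metis injD)+
    then show ?thesis using False by simp
  qed
qed

lemma three_cycle_commutator_overlap:
  assumes "distinct [a, b, c, e]"
  shows "three_cycle a b c \<circ> three_cycle b c e \<circ> three_cycle a c b \<circ> three_cycle b e c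
    = transpose a e \<circ> transpose b c"
proof
  fix x
  show "(three_cycle a b c \<circ> three_cycle b c e \<circ> three_cycle a c b \<circ> three_cycle b e c) x
    = (transpose a e \<circ> transpose b c) x"
    using assms
    by (cases "x = a"; cases "x = b"; cases "x = c"; cases "x = e") (simp_all add: three_cycle_def)
qed

lemma three_cycle_commutator_disjoint:
  assumes "distinct [a, b, c, a', b', c']"
  shows "three_cycle a b c \<circ> three_cycle a' b' c' \<circ> three_cycle a c b \<circ> three_cycle a' c' b' = id"
proof
  fix x
  show "(three_cycle a b c \<circ> three_cycle a' b' c' \<circ> three_cycle a c b \<circ> three_cycle a' c' b') x = id x"
    using assms
    by (cases "x \<in> {a, b, c}"; cases "x \<in> {a', b', c'}") (auto simp: three_cycle_def)
qed

lemma three_cycle_commutator_self: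
  assumes "distinct [a, b, c]"
  shows "three_cycle a b c \<circ> three_cycle a b c \<circ> three_cycle a c b \<circ> three_cycle a c b = id"
  using assms by (auto simp: three_cycle_def fun_eq_iff)

lemma cycle_perm_Suc:
  assumes "1 \<le> D"
  shows "cycle_perm (Suc D) = cycle_perm D \<circ> transpose D (Suc D)"
  using assms by (auto simp: cycle_perm_def transpose_def fun_eq_iff)

lemma cycle_perm_permutes_evenperm_iff:
  assumes "1 \<le> D"
  shows "cycle_perm D permutes {1..D} \<and> (evenperm (cycle_perm D) \<longleftrightarrow> odd D)"
  using assms
proof (induction D rule: dec_induct)
  case base
  have "cycle_perm 1 = id" by (auto simp: cycle_perm_def fun_eq_iff)
  then show ?case by (metis permutes_id evenperm_id odd_one)
next
  case (step D)
  have p: "cycle_perm D permutes {1..Suc D}"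
    using step.IH permutes_subset by fastforce
  have t: "transpose D (Suc D) permutes {1..Suc D}"
    using step.hyps by (intro permutes_swap_id) auto
  have "permutation (cycle_perm D)" using p permutation_permutes by blast
  then have "evenperm (cycle_perm D \<circ> transpose D (Suc D)) \<longleftrightarrow> odd (Suc D)"
    using step.IH by (simp add: evenperm_comp permutation_swap_id evenperm_swap)
  then show ?case
    unfolding cycle_perm_Suc[OF step.hyps(1)] using permutes_compose[OF t p] by blast
qed

lemma funpow_cycle_perm:
  assumes "1 \<le> p" "p \<le> D"
  shows "(cycle_perm D ^^ k) p = 1 + (p - 1 + k) mod D"
proof (induction k)
  case 0
  then show ?case using assms by simp
next
  case (Suc k)
  define y where "y = (p - 1 + k) mod D"
  have "y < D" using assms y_def by simp
  moreover have "(p - 1 + Suc k) mod D = (if Suc y = D then 0 else Suc y)"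
    unfolding y_def by (simp add: mod_Suc)
  ultimately show ?case using Suc.IH by (auto simp: cycle_perm_def y_def)
qed

(* Labels of {1..D} in which the R-th power of the long cycle is the shift by one. *)
definition step_label :: "nat \<Rightarrow> nat \<Rightarrow> nat \<Rightarrow> nat" where
  "step_label D R u = 1 + (u * R) mod D"

lemma step_label_range: "1 \<le> D \<Longrightarrow> 1 \<le> step_label D R u \<and> step_label D R u \<le> D"
  unfolding step_label_def using mod_less_divisor[of D "u * R"] by linarith

lemma funpow_cycle_perm_step_label:
  assumes "1 \<le> D"
  shows "(cycle_perm D ^^ (R * k)) (step_label D R u) = step_label D R (u + k)"
proof -
  have "(cycle_perm D ^^ (R * k)) (step_label D R u) = 1 + ((u * R) mod D + R * k) mod D"
    using funpow_cycle_perm step_label_range[OF assms] by (simp add: step_label_def)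
  also have "\<dots> = step_label D R (u + k)"
    by (simp add: step_label_def mod_add_left_eq mod_add_right_eq algebra_simps)
  finally show ?thesis .
qed

lemma step_label_add_self: "step_label D R (u + D) = step_label D R u"
  by (simp add: step_label_def algebra_simps)

lemma step_label_inj:
  assumes "Factorial_Ring.prime D" "0 < R" "R < D" "a < D" "b < D"
    and "step_label D R a = step_label D R b"
  shows "a = b"
proof -
  have "\<not> D dvd R" using assms(2,3) nat_dvd_not_less by blast
  have le_imp_eq: "x = y" if "y \<le> x" "x < D" "x * R mod D = y * R mod D" for x y
  proof -
    have "D dvd (x - y) * R"
      using that mod_eq_dvd_iff_nat[of "y * R" "x * R" D] by (simp add: diff_mult_distrib)
    then have "D dvd x - y" using assms(1) \<open>\<not> D dvd R\<close> prime_dvd_mult_iff by blast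
    moreover have "x - y < D" using that(2) by linarith
    ultimately have "\<not> 0 < x - y" using nat_dvd_not_less by blast
    then show ?thesis using that(1) by simp
  qed
  show ?thesis
    using le_imp_eq[of a b] le_imp_eq[of b a] assms(4-6)
    unfolding step_label_def by (cases "b \<le> a") auto
qed

section \<open>Conjugates in a group\<close>

definition conjugate :: "('a, 'b) monoid_scheme \<Rightarrow> 'a \<Rightarrow> 'a \<Rightarrow> 'a" where
  "conjugate G a x = a \<otimes>\<^bsub>G\<^esub> x \<otimes>\<^bsub>G\<^esub> inv\<^bsub>G\<^esub> a"

context group
begin

lemma conjugate_closed [simp]:
  "a \<in> carrier G \<Longrightarrow> x \<in> carrier G \<Longrightarrow> conjugate G a x \<in> carrier G"
  by (simp add: conjugate_def)

lemma conjugate_one [simp]: "x \<in> carrier G \<Longrightarrow> conjugate G \<one> x = x"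
  by (simp add: conjugate_def)

lemma conjugate_mult:
  "a \<in> carrier G \<Longrightarrow> b \<in> carrier G \<Longrightarrow> x \<in> carrier G \<Longrightarrow>
    conjugate G (a \<otimes> b) x = conjugate G a (conjugate G b x)"
  by (simp add: conjugate_def inv_mult_group m_assoc)

lemma conjugate_inv_conjugate:
  "a \<in> carrier G \<Longrightarrow> x \<in> carrier G \<Longrightarrow> conjugate G (inv a) (conjugate G a x) = x"
  by (simp add: conjugate_def m_assoc flip: m_assoc[of "inv a" a] m_assoc[of _ "inv a" a])

lemma conjugate_conjugate_inv:
  "a \<in> carrier G \<Longrightarrow> x \<in> carrier G \<Longrightarrow> conjugate G a (conjugate G (inv a) x) = x"
  using conjugate_inv_conjugate[of "inv a" x] by simp

lemma conjugate_by_conjugate: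
  "a \<in> carrier G \<Longrightarrow> b \<in> carrier G \<Longrightarrow> x \<in> carrier G \<Longrightarrow>
    conjugate G (conjugate G a b) x = conjugate G a (conjugate G b (conjugate G (inv a) x))"
  by (simp add: conjugate_def inv_mult_group m_assoc)

lemma conjugate_eq_self:
  "a \<in> carrier G \<Longrightarrow> x \<in> carrier G \<Longrightarrow> a \<otimes> x = x \<otimes> a \<Longrightarrow> conjugate G a x = x"
  by (simp add: conjugate_def m_assoc)

end

lemma (in group_hom) hom_conjugate:
  "a \<in> carrier G \<Longrightarrow> x \<in> carrier G \<Longrightarrow> h (conjugate G a x) = conjugate H (h a) (h x)"
  by (simp add: conjugate_def)

lemma (in group) conjugate_pow_shift:
  assumes "t \<in> carrier G" "z \<in> carrier G"
  shows "conjugate G (inv (t [^] i)) (conjugate G (t [^] (i + k)) z) = conjugate G (t [^] (k::nat)) z"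
proof -
  have "t [^] (i + k) = t [^] i \<otimes> t [^] k" using assms by (simp add: nat_pow_mult)
  then show ?thesis using assms by (simp add: conjugate_mult conjugate_inv_conjugate)
qed

(* Conjugating by t^k W t^-k fixes z and maps t^(k+1) z t^-(k+1) to t^k z t^-k, so the
   single inequality h z <> h (t z t^-1) propagates to all the conjugates t^k z t^-k. *)
lemma (in group_hom) hom_neq_conjugate_pow:
  fixes N :: nat
  assumes t: "t \<in> carrier G" and z: "z \<in> carrier G" and W: "W \<in> carrier G"
    and W_conj: "conjugate G W (conjugate G t z) = z"
    and W_comm: "\<And>j::nat. 1 \<le> j \<Longrightarrow> j + 2 \<le> N \<Longrightarrow>
      W \<otimes> conjugate G (inv (t [^] j)) z = conjugate G (inv (t [^] j)) z \<otimes> W"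
    and separated: "h z \<noteq> h (conjugate G t z)"
    and k: "1 \<le> k" "k < N"
  shows "h z \<noteq> h (conjugate G (t [^] k) z)"
  using k
proof (induction k rule: dec_induct)
  case base
  then show ?case using separated t by simp
next
  case (step k)
  define a where "a = t [^] k"
  have a: "a \<in> carrier G" using t by (simp add: a_def)
  define g where "g = conjugate G a W"
  have g: "g \<in> carrier G" using a W by (simp add: g_def)
  have "conjugate G W (conjugate G (inv a) z) = conjugate G (inv a) z"
    using W_comm[of k] step a W z by (intro G.conjugate_eq_self) (simp_all add: a_def)
  then have g_z: "conjugate G g z = z"
    using a W z by (simp add: g_def G.conjugate_by_conjugate G.conjugate_conjugate_inv)
  have g_shift: "conjugate G g (conjugate G (t [^] Suc k) z) = conjugate G a z"
    using G.conjugate_pow_shift[OF t z, of k 1] t a W z W_conj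
    by (simp add: g_def a_def G.conjugate_by_conjugate)
  show ?case
  proof
    assume "h z = h (conjugate G (t [^] Suc k) z)"
    then have "h z = h (conjugate G g (conjugate G (t [^] Suc k) z))"
      using g z t g_z by (metis G.conjugate_closed G.nat_pow_closed hom_conjugate)
    then show False using g_shift step.IH step.prems by (simp add: a_def)
  qed
qed

lemma (in group_hom) inj_on_hom_conjugates_pow:
  fixes N :: nat
  assumes t: "t \<in> carrier G" and z: "z \<in> carrier G"
    and neq: "\<And>k. 1 \<le> k \<Longrightarrow> k < N \<Longrightarrow> h z \<noteq> h (conjugate G (t [^] k) z)"
  shows "inj_on (\<lambda>i::nat. h (conjugate G (t [^] i) z)) {..<N}"
proof -
  have "h (conjugate G (t [^] i) z) \<noteq> h (conjugate G (t [^] j) z)" if "i < j" "j < N" for i j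
  proof
    assume eq: "h (conjugate G (t [^] i) z) = h (conjugate G (t [^] j) z)"
    have "h z = h (conjugate G (inv (t [^] i)) (conjugate G (t [^] (i + 0)) z))"
      using G.conjugate_pow_shift[OF t z, of i 0] z by simp
    also have "\<dots> = h (conjugate G (inv (t [^] i)) (conjugate G (t [^] (i + (j - i))) z))"
      using eq t z that by (simp add: hom_conjugate)
    also have "\<dots> = h (conjugate G (t [^] (j - i)) z)"
      using G.conjugate_pow_shift[OF t z] by simp
    finally show False using neq[of "j - i"] that by simp
  qed
  then show ?thesis
    unfolding inj_on_def by (metis lessThan_iff linorder_neqE_nat)
qed

section \<open>Word balls and full residual finiteness growth\<close>

context monoid
begin

lemma foldr_mult_closed: "set xs \<subseteq> carrier G \<Longrightarrow> foldr (\<otimes>) xs \<one> \<in> carrier G"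
  by (induction xs) auto

lemma foldr_mult_acc:
  "set xs \<subseteq> carrier G \<Longrightarrow> b \<in> carrier G \<Longrightarrow> foldr (\<otimes>) xs b = foldr (\<otimes>) xs \<one> \<otimes> b"
  by (induction xs) (auto simp: foldr_mult_closed m_assoc)

lemma foldr_mult_replicate:
  assumes "x \<in> carrier G" "b \<in> carrier G"
  shows "foldr (\<otimes>) (replicate k x) b = x [^] k \<otimes> b"
proof (induction k)
  case (Suc k)
  have "foldr (\<otimes>) (replicate (Suc k) x) b = x \<otimes> x [^] k \<otimes> b"
    using Suc assms by (simp add: m_assoc del: foldr_replicate)
  then show ?case using nat_pow_Suc2[OF assms(1)] by simp
qed (simp add: assms(2))

end

lemma foldr_in_word_ball:
  "length ws \<le> l \<Longrightarrow> set ws \<subseteq> S \<union> (\<lambda>x. inv\<^bsub>G\<^esub> x) ` S \<Longrightarrow>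
    foldr (\<otimes>\<^bsub>G\<^esub>) ws \<one>\<^bsub>G\<^esub> \<in> word_ball G S l"
  unfolding word_ball_def by blast

lemma finite_word_ball:
  assumes "finite S"
  shows "finite (word_ball G S l)"
proof -
  let ?words = "{ws. set ws \<subseteq> S \<union> (\<lambda>x. inv\<^bsub>G\<^esub> x) ` S \<and> length ws \<le> l}"
  have "word_ball G S l = (\<lambda>ws. foldr (\<otimes>\<^bsub>G\<^esub>) ws \<one>\<^bsub>G\<^esub>) ` ?words"
    unfolding word_ball_def by auto
  moreover have "finite ?words"
    by (rule finite_lists_length_le) (use assms in auto)
  ultimately show ?thesis by simp
qed

lemma (in group) word_ball_subset_carrier:
  "S \<subseteq> carrier G \<Longrightarrow> word_ball G S l \<subseteq> carrier G"
  unfolding word_ball_def using foldr_mult_closed by blast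

lemma full_rf_growth_ge:
  assumes "\<exists>(\<Delta> :: nat monoid) h. group \<Delta> \<and> finite (carrier \<Delta>)
      \<and> h \<in> hom G \<Delta> \<and> inj_on h (word_ball G S l)"
    and "\<And>(\<Delta> :: nat monoid) h. group \<Delta> \<Longrightarrow> finite (carrier \<Delta>) \<Longrightarrow>
      h \<in> hom G \<Delta> \<Longrightarrow> inj_on h (word_ball G S l) \<Longrightarrow> B \<le> card (carrier \<Delta>)"
  shows "B \<le> full_rf_growth G S l"
proof -
  let ?Q = "\<lambda>k. \<exists>(\<Delta> :: nat monoid) h. group \<Delta> \<and> finite (carrier \<Delta>)
      \<and> card (carrier \<Delta>) = k \<and> h \<in> hom G \<Delta> \<and> inj_on h (word_ball G S l)"
  have "?Q (Least ?Q)" by (rule LeastI_ex) (use assms(1) in blast)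
  then show ?thesis unfolding full_rf_growth_def using assms(2) by metis
qed

lemma finite_group_nat_copy:
  fixes A :: "('a, 'b) monoid_scheme"
  assumes "group A" and fin: "finite (carrier A)"
  shows "\<exists>(\<Delta> :: nat monoid) \<phi>. group \<Delta> \<and> finite (carrier \<Delta>)
           \<and> \<phi> \<in> hom A \<Delta> \<and> inj_on \<phi> (carrier A)"
proof -
  interpret A: group A by fact
  obtain \<phi> where bij: "bij_betw \<phi> (carrier A) {0..<card (carrier A)}"
    using ex_bij_betw_finite_nat[OF fin] by blast
  define C where "C = {0..<card (carrier A)}"
  define \<psi> where "\<psi> = inv_into (carrier A) \<phi>"
  have \<psi>C: "\<And>a. a \<in> C \<Longrightarrow> \<psi> a \<in> carrier A"
    unfolding \<psi>_def C_def using bij by (metis bij_betw_def inv_into_into)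
  have \<phi>C: "\<And>x. x \<in> carrier A \<Longrightarrow> \<phi> x \<in> C"
    unfolding C_def using bij bij_betwE by blast
  have \<psi>\<phi>: "\<And>x. x \<in> carrier A \<Longrightarrow> \<psi> (\<phi> x) = x"
    unfolding \<psi>_def using bij bij_betw_inv_into_left by metis
  have \<phi>\<psi>: "\<And>a. a \<in> C \<Longrightarrow> \<phi> (\<psi> a) = a"
    unfolding \<psi>_def C_def using bij bij_betw_inv_into_right by metis
  define \<Delta> where "\<Delta> = \<lparr>carrier = C, monoid.mult = (\<lambda>a b. \<phi> (\<psi> a \<otimes>\<^bsub>A\<^esub> \<psi> b)), one = \<phi> \<one>\<^bsub>A\<^esub>\<rparr>"
  have "group \<Delta>"
  proof (rule groupI)
    fix x y assume "x \<in> carrier \<Delta>" "y \<in> carrier \<Delta>"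
    then show "x \<otimes>\<^bsub>\<Delta>\<^esub> y \<in> carrier \<Delta>" unfolding \<Delta>_def using \<psi>C \<phi>C by simp
  next
    show "\<one>\<^bsub>\<Delta>\<^esub> \<in> carrier \<Delta>" unfolding \<Delta>_def using \<phi>C by simp
  next
    fix x y z assume "x \<in> carrier \<Delta>" "y \<in> carrier \<Delta>" "z \<in> carrier \<Delta>"
    then show "x \<otimes>\<^bsub>\<Delta>\<^esub> y \<otimes>\<^bsub>\<Delta>\<^esub> z = x \<otimes>\<^bsub>\<Delta>\<^esub> (y \<otimes>\<^bsub>\<Delta>\<^esub> z)"
      unfolding \<Delta>_def using \<psi>C \<psi>\<phi> by (simp add: A.m_assoc)
  next
    fix x assume "x \<in> carrier \<Delta>"
    then show "\<one>\<^bsub>\<Delta>\<^esub> \<otimes>\<^bsub>\<Delta>\<^esub> x = x" unfolding \<Delta>_def using \<psi>C \<psi>\<phi> \<phi>\<psi> by simp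
  next
    fix x assume x: "x \<in> carrier \<Delta>"
    show "\<exists>y\<in>carrier \<Delta>. y \<otimes>\<^bsub>\<Delta>\<^esub> x = \<one>\<^bsub>\<Delta>\<^esub>"
    proof
      show "\<phi> (inv\<^bsub>A\<^esub> (\<psi> x)) \<otimes>\<^bsub>\<Delta>\<^esub> x = \<one>\<^bsub>\<Delta>\<^esub>"
        using x unfolding \<Delta>_def using \<psi>C \<psi>\<phi> by simp
      show "\<phi> (inv\<^bsub>A\<^esub> (\<psi> x)) \<in> carrier \<Delta>"
        using x unfolding \<Delta>_def using \<psi>C \<phi>C by simp
    qed
  qed
  moreover have "\<phi> \<in> hom A \<Delta>"
    unfolding hom_def \<Delta>_def using \<phi>C \<psi>\<phi> by auto
  moreover have "finite (carrier \<Delta>)" by (simp add: \<Delta>_def C_def)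
  ultimately show ?thesis using bij bij_betw_def by blast
qed

lemma ex_finite_nat_group_hom_inj_on:
  assumes "group G" "group H" "\<rho> \<in> hom G H" "finite (\<rho> ` carrier G)"
    and "B \<subseteq> carrier G" "inj_on \<rho> B"
  shows "\<exists>(\<Delta> :: nat monoid) h. group \<Delta> \<and> finite (carrier \<Delta>) \<and> h \<in> hom G \<Delta> \<and> inj_on h B"
proof -
  interpret \<rho>: group_hom G H \<rho>
    using assms(1-3) by (simp add: group_hom_def group_hom_axioms_def)
  let ?Q = "H\<lparr>carrier := \<rho> ` carrier G\<rparr>"
  have "group ?Q" by (rule subgroup.subgroup_is_group[OF \<rho>.img_is_subgroup assms(2)])
  then obtain \<Delta> :: "nat monoid" and \<phi> where \<Delta>: "group \<Delta>" "finite (carrier \<Delta>)"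
    "\<phi> \<in> hom ?Q \<Delta>" "inj_on \<phi> (\<rho> ` carrier G)"
    using finite_group_nat_copy assms(4) by fastforce
  have "(\<lambda>x. \<phi> (\<rho> x)) \<in> hom G \<Delta>"
    using \<Delta>(3) unfolding hom_def by (auto simp: Pi_iff)
  moreover have "inj_on (\<lambda>x. \<phi> (\<rho> x)) B"
    using comp_inj_on[OF assms(6) inj_on_subset[OF \<Delta>(4)]] assms(5) by (auto simp: comp_def)
  ultimately show ?thesis using \<Delta>(1,2) by blast
qed

section \<open>The product of alternating groups\<close>

lemma Alt_prod_carrier_iff:
  "f \<in> carrier (Alt_prod d) \<longleftrightarrow> f 0 = id \<and> (\<forall>n\<ge>1. f n permutes {1..d n} \<and> evenperm (f n))"
  by (simp add: Alt_prod_def)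

lemma Alt_prod_mult [simp]: "f \<otimes>\<^bsub>Alt_prod d\<^esub> g = (\<lambda>n. f n \<circ> g n)"
  by (simp add: Alt_prod_def)

lemma Alt_prod_one [simp]: "\<one>\<^bsub>Alt_prod d\<^esub> = (\<lambda>n. id)"
  by (simp add: Alt_prod_def)

lemma Alt_prod_carrierI:
  "f 0 = id \<Longrightarrow> (\<And>n. 1 \<le> n \<Longrightarrow> f n permutes {1..d n} \<and> evenperm (f n)) \<Longrightarrow>
    f \<in> carrier (Alt_prod d)"
  by (simp add: Alt_prod_carrier_iff)

lemma Alt_prod_coord_permutes: "f \<in> carrier (Alt_prod d) \<Longrightarrow> f n permutes {1..d n}"
  by (cases "n = 0") (auto simp: Alt_prod_carrier_iff permutes_id)

lemma bij_Alt_prod_coord: "f \<in> carrier (Alt_prod d) \<Longrightarrow> bij (f n)"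
  using Alt_prod_coord_permutes permutes_bij by blast

lemma Alt_prod_inv_closed:
  assumes "f \<in> carrier (Alt_prod d)"
  shows "(\<lambda>n. Hilbert_Choice.inv (f n)) \<in> carrier (Alt_prod d)"
  unfolding Alt_prod_carrier_iff
proof (intro conjI allI impI)
  show "Hilbert_Choice.inv (f 0) = id" using assms by (simp add: Alt_prod_carrier_iff inv_id)
  fix n :: nat assume "1 \<le> n"
  then have p: "f n permutes {1..d n}" "evenperm (f n)" using assms by (auto simp: Alt_prod_carrier_iff)
  show "Hilbert_Choice.inv (f n) permutes {1..d n}" using permutes_inv[OF p(1)] .
  have "permutation (f n)" using p(1) permutation_permutes by blast
  then show "evenperm (Hilbert_Choice.inv (f n))" using p(2) evenperm_inv by metis
qed

lemma Alt_prod_group: "group (Alt_prod d)"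
proof (rule groupI)
  fix x y assume x: "x \<in> carrier (Alt_prod d)" and y: "y \<in> carrier (Alt_prod d)"
  show "x \<otimes>\<^bsub>Alt_prod d\<^esub> y \<in> carrier (Alt_prod d)"
    unfolding Alt_prod_carrier_iff Alt_prod_mult
  proof (intro conjI allI impI)
    show "x 0 \<circ> y 0 = id" using x y by (simp add: Alt_prod_carrier_iff)
    fix n :: nat assume "1 \<le> n"
    then have p: "x n permutes {1..d n}" "evenperm (x n)" "y n permutes {1..d n}" "evenperm (y n)"
      using x y by (auto simp: Alt_prod_carrier_iff)
    show "x n \<circ> y n permutes {1..d n}" by (rule permutes_compose[OF p(3) p(1)])
    have "permutation (x n)" "permutation (y n)" using p permutation_permutes by blast+
    then show "evenperm (x n \<circ> y n)" using p evenperm_comp by metis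
  qed
next
  show "\<one>\<^bsub>Alt_prod d\<^esub> \<in> carrier (Alt_prod d)"
    by (simp add: Alt_prod_carrier_iff permutes_id evenperm_id)
next
  fix x y z :: "nat \<Rightarrow> nat \<Rightarrow> nat"
  show "x \<otimes>\<^bsub>Alt_prod d\<^esub> y \<otimes>\<^bsub>Alt_prod d\<^esub> z = x \<otimes>\<^bsub>Alt_prod d\<^esub> (y \<otimes>\<^bsub>Alt_prod d\<^esub> z)"
    by (simp add: o_assoc)
next
  fix x :: "nat \<Rightarrow> nat \<Rightarrow> nat"
  show "\<one>\<^bsub>Alt_prod d\<^esub> \<otimes>\<^bsub>Alt_prod d\<^esub> x = x" by simp
next
  fix x assume x: "x \<in> carrier (Alt_prod d)"
  show "\<exists>y\<in>carrier (Alt_prod d). y \<otimes>\<^bsub>Alt_prod d\<^esub> x = \<one>\<^bsub>Alt_prod d\<^esub>"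
  proof
    show "(\<lambda>n. Hilbert_Choice.inv (x n)) \<otimes>\<^bsub>Alt_prod d\<^esub> x = \<one>\<^bsub>Alt_prod d\<^esub>"
      using bij_Alt_prod_coord[OF x] by (simp add: fun_eq_iff bij_is_inj)
  qed (rule Alt_prod_inv_closed[OF x])
qed

lemma Alt_prod_inv:
  assumes "f \<in> carrier (Alt_prod d)"
  shows "inv\<^bsub>Alt_prod d\<^esub> f = (\<lambda>n. Hilbert_Choice.inv (f n))"
  by (rule group.inv_equality[OF Alt_prod_group])
     (use bij_Alt_prod_coord[OF assms] Alt_prod_inv_closed[OF assms] assms
       in \<open>auto simp: fun_eq_iff bij_is_inj\<close>)

definition truncate_coords :: "nat \<Rightarrow> (nat \<Rightarrow> 'a \<Rightarrow> 'a) \<Rightarrow> nat \<Rightarrow> 'a \<Rightarrow> 'a" where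
  "truncate_coords M x = (\<lambda>n. if n \<le> M then x n else id)"

lemma truncate_coords_closed:
  "x \<in> carrier (Alt_prod d) \<Longrightarrow> truncate_coords M x \<in> carrier (Alt_prod d)"
  by (auto simp: truncate_coords_def Alt_prod_carrier_iff permutes_id evenperm_id)

lemma truncate_coords_comp:
  "truncate_coords M (\<lambda>n. x n \<circ> y n) = (\<lambda>n. truncate_coords M x n \<circ> truncate_coords M y n)"
  by (simp add: truncate_coords_def fun_eq_iff)

lemma finite_truncate_coords_image: "finite (truncate_coords M ` carrier (Alt_prod d))"
proof -
  let ?perms = "PiE {..M} (\<lambda>n. {p. p permutes {1..d n}})"
  let ?ext = "\<lambda>g. (\<lambda>n. if n \<le> M then g n else (id :: nat \<Rightarrow> nat))"
  have "finite ?perms" by (intro finite_PiE) (auto intro: finite_permutations)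
  moreover have "truncate_coords M ` carrier (Alt_prod d) \<subseteq> ?ext ` ?perms"
  proof
    fix y assume "y \<in> truncate_coords M ` carrier (Alt_prod d)"
    then obtain x where x: "x \<in> carrier (Alt_prod d)" and y: "y = truncate_coords M x" by blast
    have "restrict x {..M} \<in> ?perms"
      using Alt_prod_coord_permutes[OF x] by auto
    moreover have "y = ?ext (restrict x {..M})" by (auto simp: y truncate_coords_def)
    ultimately show "y \<in> ?ext ` ?perms" by blast
  qed
  ultimately show ?thesis using finite_surj by blast
qed

lemma ex_inj_on_truncate_coords:
  assumes "finite B"
  shows "\<exists>M. inj_on (truncate_coords M) B"
proof -
  define first_diff where "first_diff x y = (LEAST n. x n \<noteq> y n)" for x y :: "nat \<Rightarrow> 'a \<Rightarrow> 'a"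
  define M where "M = Max (insert 0 ((\<lambda>(x, y). first_diff x y) ` (B \<times> B)))"
  have "inj_on (truncate_coords M) B"
  proof (rule inj_onI, rule ccontr)
    fix x y assume xy: "x \<in> B" "y \<in> B" and eq: "truncate_coords M x = truncate_coords M y"
      and "x \<noteq> y"
    then obtain n0 where "x n0 \<noteq> y n0" by (meson ext)
    then have "x (first_diff x y) \<noteq> y (first_diff x y)" unfolding first_diff_def by (rule LeastI)
    moreover have "first_diff x y \<le> M"
      unfolding M_def using assms xy by (intro Max_ge) auto
    ultimately show False using eq unfolding truncate_coords_def by (metis (full_types))
  qed
  then show ?thesis by blast
qed

section \<open>The group generated by alpha and beta\<close>

locale Alt_prod_gens =
  fixes d r :: "nat \<Rightarrow> nat"
  assumes odd_d: "\<And>n. 1 \<le> n \<Longrightarrow> odd (d n)"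
    and r_pos: "\<And>n. 1 \<le> n \<Longrightarrow> 1 \<le> r n"
    and two_r_lt_d: "\<And>n. 1 \<le> n \<Longrightarrow> 2 * r n + 1 \<le> d n"
begin

abbreviation "A \<equiv> Alt_prod d"
abbreviation "G \<equiv> G_grp d r"
abbreviation "\<alpha> \<equiv> alpha_el d"
abbreviation "\<beta> \<equiv> beta_el r"

lemma alpha_in_A: "\<alpha> \<in> carrier A"
proof (rule Alt_prod_carrierI)
  fix n :: nat assume n: "1 \<le> n"
  then have "1 \<le> d n" using two_r_lt_d[OF n] by simp
  then show "\<alpha> n permutes {1..d n} \<and> evenperm (\<alpha> n)"
    using n odd_d[OF n] cycle_perm_permutes_evenperm_iff by (simp add: alpha_el_def)
qed (simp add: alpha_el_def)

lemma beta_in_A: "\<beta> \<in> carrier A"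
proof (rule Alt_prod_carrierI)
  fix n :: nat assume n: "1 \<le> n"
  then show "\<beta> n permutes {1..d n} \<and> evenperm (\<beta> n)"
    using r_pos[OF n] two_r_lt_d[OF n]
    by (auto simp: beta_el_def intro!: three_cycle_permutes evenperm_three_cycle)
qed (simp add: beta_el_def)

lemma G_carrier: "carrier G = generate A {\<alpha>, \<beta>}"
  by (simp add: G_grp_def)

lemma subgroup_G: "subgroup (carrier G) A"
  unfolding G_carrier
  by (rule group.generate_is_subgroup[OF Alt_prod_group]) (use alpha_in_A beta_in_A in auto)

lemma G_group: "group G"
  using subgroup.subgroup_is_group[OF subgroup_G Alt_prod_group] by (simp add: G_grp_def)

sublocale G: group G
  by (rule G_group)

lemma G_carrier_subset: "carrier G \<subseteq> carrier A"
  using subgroup_G subgroup.subset by blast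

lemma G_mult: "x \<otimes>\<^bsub>G\<^esub> y = (\<lambda>n. x n \<circ> y n)"
  by (simp add: G_grp_def Alt_prod_def)

lemma G_one: "\<one>\<^bsub>G\<^esub> = (\<lambda>n. id)"
  by (simp add: G_grp_def Alt_prod_def)

lemma G_inv:
  assumes "x \<in> carrier G"
  shows "inv\<^bsub>G\<^esub> x = (\<lambda>n. Hilbert_Choice.inv (x n))"
proof -
  have "inv\<^bsub>G\<^esub> x = inv\<^bsub>A\<^esub> x"
    unfolding G_grp_def using assms subgroup_G
    by (intro group.m_inv_consistent[OF Alt_prod_group]) (simp_all add: G_grp_def)
  then show ?thesis using Alt_prod_inv G_carrier_subset assms by auto
qed

lemma G_pow: "x [^]\<^bsub>G\<^esub> (k::nat) = (\<lambda>n. x n ^^ k)"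
  by (induction k) (simp_all add: G_mult G_one fun_eq_iff funpow_Suc_right del: funpow.simps)

lemma bij_G_coord: "x \<in> carrier G \<Longrightarrow> bij (x n)"
  using bij_Alt_prod_coord G_carrier_subset by blast

lemma G_coord_0: "x \<in> carrier G \<Longrightarrow> x 0 = id"
  using G_carrier_subset Alt_prod_carrier_iff by blast

lemma alpha_G: "\<alpha> \<in> carrier G" and beta_G: "\<beta> \<in> carrier G"
  unfolding G_carrier by (auto intro: generate.incl)

lemma conjugate_coord:
  "a \<in> carrier G \<Longrightarrow> x \<in> carrier G \<Longrightarrow> conjugate G a x n = a n \<circ> x n \<circ> Hilbert_Choice.inv (a n)"
  by (simp add: conjugate_def G_mult G_inv)

lemma conjugate_coord_id:
  assumes "a \<in> carrier G" "x \<in> carrier G" "x n = id"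
  shows "conjugate G a x n = id"
  using assms surj_iff[THEN iffD1, OF bij_is_surj[OF bij_G_coord[OF assms(1)]]]
  by (simp add: conjugate_coord)

lemma ex_finite_quotient_inj_on_ball:
  "\<exists>(\<Delta> :: nat monoid) h. group \<Delta> \<and> finite (carrier \<Delta>) \<and> h \<in> hom G \<Delta>
    \<and> inj_on h (word_ball G {\<alpha>, \<beta>} l)"
proof -
  let ?B = "word_ball G {\<alpha>, \<beta>} l"
  have "finite ?B" by (rule finite_word_ball) simp
  then obtain M where inj: "inj_on (truncate_coords M) ?B"
    using ex_inj_on_truncate_coords by blast
  have "?B \<subseteq> carrier G"
    by (rule G.word_ball_subset_carrier) (use alpha_G beta_G in auto)
  moreover have "truncate_coords M \<in> hom G A"
    using truncate_coords_closed G_carrier_subset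
    by (auto simp: hom_def G_mult truncate_coords_comp)
  moreover have "finite (truncate_coords M ` carrier G)"
    using finite_truncate_coords_image G_carrier_subset by (meson finite_subset image_mono)
  ultimately show ?thesis
    using ex_finite_nat_group_hom_inj_on[OF G_group Alt_prod_group] inj by blast
qed

end

section \<open>One coordinate of the product\<close>

locale good_coordinate = Alt_prod_gens +
  fixes m :: nat
  assumes m_pos: "1 \<le> m" and prime_d_m: "Factorial_Ring.prime (d m)" and d_m_gt_8: "8 < d m"
    and other_coord: "\<And>n. 1 \<le> n \<Longrightarrow> n \<noteq> m \<Longrightarrow>
      d n dvd r m \<or> (r m + 2 * r n < d n \<and> r m \<noteq> r n \<and> r m \<noteq> 2 * r n)"
begin

abbreviation "D \<equiv> d m"
abbreviation "R \<equiv> r m"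
abbreviation "P \<equiv> step_label D R"

definition "\<sigma> = \<alpha> [^]\<^bsub>G\<^esub> R"

definition "z = \<beta> \<otimes>\<^bsub>G\<^esub> \<sigma> \<otimes>\<^bsub>G\<^esub> \<beta> \<otimes>\<^bsub>G\<^esub> inv\<^bsub>G\<^esub> \<sigma> \<otimes>\<^bsub>G\<^esub> inv\<^bsub>G\<^esub> \<beta>
   \<otimes>\<^bsub>G\<^esub> \<sigma> \<otimes>\<^bsub>G\<^esub> inv\<^bsub>G\<^esub> \<beta> \<otimes>\<^bsub>G\<^esub> inv\<^bsub>G\<^esub> \<sigma>"

definition "beta_shift v = conjugate G (\<sigma> [^]\<^bsub>G\<^esub> (v::nat)) \<beta>"

(* In coordinate m, W acts on labels as w below: it maps the block 4..7 onto 0..3 and fixes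
   every label from 8 on. *)
definition "W = beta_shift 3 \<otimes>\<^bsub>G\<^esub> beta_shift 2 \<otimes>\<^bsub>G\<^esub> beta_shift 1 \<otimes>\<^bsub>G\<^esub> beta_shift 0
  \<otimes>\<^bsub>G\<^esub> beta_shift 5 \<otimes>\<^bsub>G\<^esub> beta_shift 4 \<otimes>\<^bsub>G\<^esub> beta_shift 3 \<otimes>\<^bsub>G\<^esub> beta_shift 2"

definition "w = three_cycle 3 4 5 \<circ> three_cycle 2 3 4 \<circ> three_cycle 1 2 3 \<circ> three_cycle 0 1 2
  \<circ> three_cycle 5 6 7 \<circ> three_cycle 4 5 6 \<circ> three_cycle 3 4 5 \<circ> three_cycle (2::nat) 3 4"

lemma R_pos: "1 \<le> R" and two_R_lt_D: "2 * R < D"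
  using r_pos[OF m_pos] two_r_lt_d[OF m_pos] by auto

lemma sigma_G: "\<sigma> \<in> carrier G"
  by (simp add: \<sigma>_def alpha_G)

lemma z_G: "z \<in> carrier G"
  by (simp add: z_def sigma_G beta_G)

lemma beta_shift_G: "beta_shift v \<in> carrier G"
  by (simp add: beta_shift_def sigma_G beta_G)

lemma W_G: "W \<in> carrier G"
  by (simp add: W_def beta_shift_G)

lemma sigma_pow_coord:
  "(\<sigma> [^]\<^bsub>G\<^esub> (k::nat)) n = (if n = 0 then id else cycle_perm (d n) ^^ (R * k))"
  using alpha_G by (simp add: \<sigma>_def G.nat_pow_pow G_pow alpha_el_def funpow_mult)

lemma sigma_coord: "\<sigma> n = (if n = 0 then id else cycle_perm (d n) ^^ R)"
  by (simp add: \<sigma>_def G_pow alpha_el_def)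

lemma z_coord:
  assumes "1 \<le> n"
  defines "f \<equiv> \<sigma> n"
  shows "z n = three_cycle 1 (1 + r n) (1 + 2 * r n)
    \<circ> three_cycle (f 1) (f (1 + r n)) (f (1 + 2 * r n))
    \<circ> three_cycle 1 (1 + 2 * r n) (1 + r n)
    \<circ> three_cycle (f 1) (f (1 + 2 * r n)) (f (1 + r n))"
proof -
  let ?a = "1::nat" and ?b = "1 + r n" and ?c = "1 + 2 * r n"
  have \<beta>n: "\<beta> n = three_cycle ?a ?b ?c" using assms(1) by (simp add: beta_el_def)
  have inv_\<beta>n: "Hilbert_Choice.inv (\<beta> n) = three_cycle ?a ?c ?b"
    unfolding \<beta>n using r_pos[OF assms(1)] by (intro inv_three_cycle) auto
  have "bij f" unfolding f_def using bij_G_coord sigma_G by blast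
  have "z n = \<beta> n \<circ> f \<circ> \<beta> n \<circ> Hilbert_Choice.inv f \<circ> Hilbert_Choice.inv (\<beta> n) \<circ> f
      \<circ> Hilbert_Choice.inv (\<beta> n) \<circ> Hilbert_Choice.inv f"
    unfolding z_def f_def using sigma_G beta_G by (simp add: G_mult G_inv)
  also have "\<dots> = three_cycle ?a ?b ?c \<circ> (f \<circ> three_cycle ?a ?b ?c \<circ> Hilbert_Choice.inv f)
      \<circ> three_cycle ?a ?c ?b \<circ> (f \<circ> three_cycle ?a ?c ?b \<circ> Hilbert_Choice.inv f)"
    unfolding inv_\<beta>n unfolding \<beta>n by (simp add: o_assoc)
  finally show ?thesis unfolding conj_three_cycle[OF \<open>bij f\<close>] .
qed

lemma label_inj_iff: "a < D \<Longrightarrow> b < D \<Longrightarrow> P a = P b \<longleftrightarrow> a = b"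
  using step_label_inj[OF prime_d_m, of R a b] R_pos two_R_lt_D by auto

lemma label_0: "P 0 = 1" and label_1: "P 1 = 1 + R" and label_2: "P 2 = 1 + 2 * R"
  using two_R_lt_D by (simp_all add: step_label_def mult.commute)

lemma sigma_pow_label: "(\<sigma> [^]\<^bsub>G\<^esub> (k::nat)) m (P u) = P (u + k)"
  using m_pos d_m_gt_8 by (simp add: sigma_pow_coord funpow_cycle_perm_step_label)

lemma sigma_label: "\<sigma> m (P u) = P (u + 1)"
  using m_pos d_m_gt_8 funpow_cycle_perm_step_label[of D R 1 u] by (simp add: sigma_coord)

lemma z_at_m: "z m = transpose (P 0) (P 3) \<circ> transpose (P 1) (P 2)"
proof -
  have "\<sigma> m (P 0) = P 1" "\<sigma> m (P 1) = P 2" "\<sigma> m (P 2) = P 3"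
    using sigma_label[of 0] sigma_label[of 1] sigma_label[of 2]
    by (simp_all add: numeral_2_eq_2 numeral_3_eq_3)
  then have "z m = three_cycle (P 0) (P 1) (P 2) \<circ> three_cycle (P 1) (P 2) (P 3)
    \<circ> three_cycle (P 0) (P 2) (P 1) \<circ> three_cycle (P 1) (P 3) (P 2)"
    using z_coord[OF m_pos] unfolding label_0 label_1 label_2 by simp
  also have "\<dots> = transpose (P 0) (P 3) \<circ> transpose (P 1) (P 2)"
    by (rule three_cycle_commutator_overlap) (use d_m_gt_8 label_inj_iff in auto)
  finally show ?thesis .
qed

lemma z_off_m:
  assumes "n \<noteq> m"
  shows "z n = id"
proof (cases "n = 0")
  case True
  then show ?thesis using z_G G_coord_0 by blast
next
  case False
  then have n: "1 \<le> n" by simp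
  have rn: "1 \<le> r n" "2 * r n + 1 \<le> d n" using r_pos[OF n] two_r_lt_d[OF n] by auto
  have \<sigma>n: "\<sigma> n p = 1 + (p - 1 + R) mod d n" if "1 \<le> p" "p \<le> d n" for p
    using sigma_coord[of n] False funpow_cycle_perm[OF that] by simp
  from other_coord[OF n assms]
  consider "d n dvd R" | "R + 2 * r n < d n" "R \<noteq> r n" "R \<noteq> 2 * r n" by blast
  then show ?thesis
  proof cases
    case 1
    have "\<sigma> n p = p" if "1 \<le> p" "p \<le> d n" for p
    proof -
      have "(p - 1 + R) mod d n = (p - 1) mod d n"
        using 1 by (simp add: mod_add_right_eq[symmetric])
      also have "\<dots> = p - 1" using that by simp
      finally show ?thesis using \<sigma>n[OF that] that by simp
    qed
    then have "\<sigma> n 1 = 1" "\<sigma> n (1 + r n) = 1 + r n" "\<sigma> n (1 + 2 * r n) = 1 + 2 * r n"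
      using rn by auto
    then show ?thesis
      using z_coord[OF n] three_cycle_commutator_self[of 1 "1 + r n" "1 + 2 * r n"] rn by simp
  next
    case 2
    then have "\<sigma> n 1 = 1 + R" "\<sigma> n (1 + r n) = 1 + R + r n"
      "\<sigma> n (1 + 2 * r n) = 1 + R + 2 * r n"
      using \<sigma>n rn by auto
    then show ?thesis
      using z_coord[OF n] 2 rn R_pos three_cycle_commutator_disjoint[of 1 "1 + r n" "1 + 2 * r n"
          "1 + R" "1 + R + r n" "1 + R + 2 * r n"]
      by simp
  qed
qed

lemma beta_shift_at_m: "beta_shift v m = three_cycle (P v) (P (v + 1)) (P (v + 2))"
proof -
  have "bij ((\<sigma> [^]\<^bsub>G\<^esub> v) m)" using bij_G_coord sigma_G by simp
  moreover have "\<beta> m = three_cycle (P 0) (P 1) (P 2)"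
    unfolding label_0 label_1 label_2 using m_pos by (simp add: beta_el_def)
  ultimately show ?thesis
    using sigma_G beta_G
    by (simp add: beta_shift_def conjugate_coord conj_three_cycle sigma_pow_label add.commute)
qed

lemma three_cycle_label:
  assumes "a < D" "b < D" "c < D" "u < D"
  shows "three_cycle (P a) (P b) (P c) (P u) = P (three_cycle a b c u)"
  using assms label_inj_iff by (auto simp: three_cycle_def)

lemma W_at_m:
  assumes "u < D"
  shows "W m (P u) = P (w u)"
proof -
  have "W m = beta_shift 3 m \<circ> beta_shift 2 m \<circ> beta_shift 1 m \<circ> beta_shift 0 m
      \<circ> beta_shift 5 m \<circ> beta_shift 4 m \<circ> beta_shift 3 m \<circ> beta_shift 2 m"
    by (simp add: W_def G_mult)
  moreover have "(k::nat) \<le> 8 \<Longrightarrow> k < D" for k using d_m_gt_8 by simp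
  ultimately show ?thesis
    unfolding w_def beta_shift_at_m
    using assms by (simp add: three_cycle_label three_cycle_less numeral_eq_Suc)
qed

lemma w_block: "w 4 = 0" "w 5 = 1" "w 6 = 2" "w 7 = 3"
  by (simp_all add: w_def three_cycle_def)

lemma w_fixes: "8 \<le> u \<Longrightarrow> w u = u"
  by (simp add: w_def three_cycle_def)

lemma conj_sigma4_z_at_m:
  "conjugate G (\<sigma> [^]\<^bsub>G\<^esub> (4::nat)) z m = transpose (P 4) (P 7) \<circ> transpose (P 5) (P 6)"
proof -
  have "bij ((\<sigma> [^]\<^bsub>G\<^esub> (4::nat)) m)" using bij_G_coord sigma_G by simp
  then show ?thesis
    using sigma_G z_G by (simp add: conjugate_coord z_at_m conj_double_transposition sigma_pow_label)
qed

lemma W_conj_sigma4_z: "conjugate G W (conjugate G (\<sigma> [^]\<^bsub>G\<^esub> (4::nat)) z) = z"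
proof
  fix n
  show "conjugate G W (conjugate G (\<sigma> [^]\<^bsub>G\<^esub> (4::nat)) z) n = z n"
  proof (cases "n = m")
    case True
    have "(k::nat) \<le> 8 \<Longrightarrow> k < D" for k using d_m_gt_8 by simp
    then show ?thesis
      using True W_G sigma_G z_G bij_G_coord[OF W_G]
      by (simp add: conjugate_coord[of W] conj_sigma4_z_at_m conj_double_transposition
          W_at_m w_block z_at_m)
  next
    case False
    then show ?thesis
      using W_G sigma_G z_G by (simp add: conjugate_coord_id z_off_m)
  qed
qed

lemma inv_sigma_pow_label:
  assumes "k \<le> D" "u < D"
  shows "Hilbert_Choice.inv ((\<sigma> [^]\<^bsub>G\<^esub> k) m) (P u) = P (D - k + u)"
proof -
  have "(\<sigma> [^]\<^bsub>G\<^esub> k) m (P (D - k + u)) = P (u + D)"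
    unfolding sigma_pow_label using assms by (simp add: add.commute)
  also have "\<dots> = P u" by (rule step_label_add_self)
  finally show ?thesis
    using bij_G_coord[of "\<sigma> [^]\<^bsub>G\<^esub> k" m] sigma_G by (metis G.nat_pow_closed bij_is_inj inv_f_eq)
qed

lemma W_commutes_conj_z:
  assumes "1 \<le> j" "j + 2 \<le> D div 4"
  defines "y \<equiv> conjugate G (inv\<^bsub>G\<^esub> (\<sigma> [^]\<^bsub>G\<^esub> (4 * j))) z"
  shows "W \<otimes>\<^bsub>G\<^esub> y = y \<otimes>\<^bsub>G\<^esub> W"
proof
  fix n
  let ?g = "inv\<^bsub>G\<^esub> (\<sigma> [^]\<^bsub>G\<^esub> (4 * j))"
  have g: "?g \<in> carrier G" using sigma_G by simp
  show "(W \<otimes>\<^bsub>G\<^esub> y) n = (y \<otimes>\<^bsub>G\<^esub> W) n"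
  proof (cases "n = m")
    case True
    have j: "4 * j + 8 \<le> D" using assms(2) by linarith
    define b where "b = D - 4 * j"
    have "?g m = Hilbert_Choice.inv ((\<sigma> [^]\<^bsub>G\<^esub> (4 * j)) m)" using sigma_G by (simp add: G_inv)
    then have g_label: "?g m (P u) = P (b + u)" if "u < 4" for u
      using inv_sigma_pow_label[of "4 * j" u] j that by (simp add: b_def)
    have y_m: "y m = transpose (P b) (P (b + 3)) \<circ> transpose (P (b + 1)) (P (b + 2))"
      using g z_G bij_G_coord[OF g]
      by (simp add: y_def conjugate_coord z_at_m conj_double_transposition g_label)
    have W_fixes: "W m (P (b + k)) = P (b + k)" if "k < 4" for k
      using W_at_m w_fixes that j assms(1) by (simp add: b_def)
    have "inj (W m)" using bij_G_coord[OF W_G] bij_is_inj by blast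
    then have "W m \<circ> transpose (P b) (P (b + 3)) = transpose (P b) (P (b + 3)) \<circ> W m"
      and "W m \<circ> transpose (P (b + 1)) (P (b + 2)) = transpose (P (b + 1)) (P (b + 2)) \<circ> W m"
      using W_fixes[of 0] W_fixes[of 1] W_fixes[of 2] W_fixes[of 3]
      by (simp_all add: comp_transpose_commute)
    then have "W m \<circ> y m = y m \<circ> W m" unfolding y_m fun_eq_iff comp_def by simp
    then show ?thesis using True by (simp add: G_mult)
  next
    case False
    then have "y n = id" unfolding y_def using g z_G by (simp add: conjugate_coord_id z_off_m)
    then show ?thesis by (simp add: G_mult)
  qed
qed

lemma z_neq_conj_sigma4_z: "z \<noteq> conjugate G (\<sigma> [^]\<^bsub>G\<^esub> (4::nat)) z"
proof
  assume eq: "z = conjugate G (\<sigma> [^]\<^bsub>G\<^esub> (4::nat)) z"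
  have "(k::nat) \<le> 8 \<Longrightarrow> k < D" for k using d_m_gt_8 by simp
  then have "z m (P 0) = P 3" and "conjugate G (\<sigma> [^]\<^bsub>G\<^esub> (4::nat)) z m (P 0) = P 0"
    using label_inj_iff by (simp_all add: z_at_m conj_sigma4_z_at_m)
  then have "P 3 = P 0" using eq by metis
  then show False using label_inj_iff[of 3 0] d_m_gt_8 by simp
qed

definition "z_word = [\<beta>] @ replicate R \<alpha> @ [\<beta>] @ replicate R (inv\<^bsub>G\<^esub> \<alpha>) @ [inv\<^bsub>G\<^esub> \<beta>]
   @ replicate R \<alpha> @ [inv\<^bsub>G\<^esub> \<beta>] @ replicate R (inv\<^bsub>G\<^esub> \<alpha>)"

definition "conj_z_word = replicate (R * 4) \<alpha> @ z_word @ replicate (R * 4) (inv\<^bsub>G\<^esub> \<alpha>)"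

lemma set_z_word: "set z_word \<subseteq> {\<alpha>, \<beta>} \<union> (\<lambda>x. inv\<^bsub>G\<^esub> x) ` {\<alpha>, \<beta>}"
  by (auto simp: z_word_def)

lemma set_conj_z_word: "set conj_z_word \<subseteq> {\<alpha>, \<beta>} \<union> (\<lambda>x. inv\<^bsub>G\<^esub> x) ` {\<alpha>, \<beta>}"
  using set_z_word by (auto simp: conj_z_word_def)

lemma foldr_z_word: "foldr (\<otimes>\<^bsub>G\<^esub>) z_word \<one>\<^bsub>G\<^esub> = z"
  using alpha_G beta_G
  by (simp add: z_word_def z_def \<sigma>_def G.foldr_mult_replicate G.nat_pow_inv G.m_assoc
      del: foldr_replicate)

lemma foldr_z_word_acc: "b \<in> carrier G \<Longrightarrow> foldr (\<otimes>\<^bsub>G\<^esub>) z_word b = z \<otimes>\<^bsub>G\<^esub> b"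
  using G.foldr_mult_acc[of z_word b] set_z_word alpha_G beta_G by (auto simp: foldr_z_word)

lemma foldr_conj_z_word: "foldr (\<otimes>\<^bsub>G\<^esub>) conj_z_word \<one>\<^bsub>G\<^esub> = conjugate G (\<sigma> [^]\<^bsub>G\<^esub> (4::nat)) z"
  using alpha_G z_G
  by (simp add: conj_z_word_def G.foldr_mult_replicate foldr_z_word_acc conjugate_def \<sigma>_def
      G.nat_pow_pow G.nat_pow_inv G.m_assoc del: foldr_replicate)

lemma z_in_word_ball: "12 * R + 4 \<le> l \<Longrightarrow> z \<in> word_ball G {\<alpha>, \<beta>} l"
  unfolding foldr_z_word[symmetric]
  by (rule foldr_in_word_ball[OF _ set_z_word]) (simp add: z_word_def)

lemma conj_sigma4_z_in_word_ball:
  "12 * R + 4 \<le> l \<Longrightarrow> conjugate G (\<sigma> [^]\<^bsub>G\<^esub> (4::nat)) z \<in> word_ball G {\<alpha>, \<beta>} l"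
  unfolding foldr_conj_z_word[symmetric]
  by (rule foldr_in_word_ball[OF _ set_conj_z_word]) (simp add: conj_z_word_def z_word_def)

lemma d_div_4_le_card:
  fixes \<Delta> :: "('c, 'e) monoid_scheme"
  assumes \<Delta>: "group \<Delta>" "finite (carrier \<Delta>)" and h: "h \<in> hom G \<Delta>"
    and inj: "inj_on h (word_ball G {\<alpha>, \<beta>} l)" and l: "12 * R + 4 \<le> l"
  shows "D div 4 \<le> card (carrier \<Delta>)"
proof -
  interpret h: group_hom G \<Delta> h
    using \<Delta>(1) h G_group by (simp add: group_hom_def group_hom_axioms_def)
  let ?t = "\<sigma> [^]\<^bsub>G\<^esub> (4::nat)"
  have "h z \<noteq> h (conjugate G ?t z)"
    using inj z_in_word_ball[OF l] conj_sigma4_z_in_word_ball[OF l] z_neq_conj_sigma4_z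
    by (meson inj_on_contraD)
  then have "h z \<noteq> h (conjugate G (?t [^]\<^bsub>G\<^esub> k) z)" if "1 \<le> k" "k < D div 4" for k
    using h.hom_neq_conjugate_pow[where t = ?t and N = "D div 4"]
      sigma_G z_G W_G W_conj_sigma4_z W_commutes_conj_z that
    by (simp add: G.nat_pow_pow mult.commute)
  then have "inj_on (\<lambda>i::nat. h (conjugate G (?t [^]\<^bsub>G\<^esub> i) z)) {..<D div 4}"
    using sigma_G z_G by (intro h.inj_on_hom_conjugates_pow) simp_all
  moreover have "(\<lambda>i::nat. h (conjugate G (?t [^]\<^bsub>G\<^esub> i) z)) ` {..<D div 4} \<subseteq> carrier \<Delta>"
    using sigma_G z_G by auto
  ultimately show ?thesis using card_inj_on_le[OF _ _ \<Delta>(2)] by fastforce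
qed

lemma d_div_4_le_full_rf_growth:
  "12 * R + 4 \<le> l \<Longrightarrow> D div 4 \<le> full_rf_growth G {\<alpha>, \<beta>} l"
  by (rule full_rf_growth_ge[OF ex_finite_quotient_inj_on_ball d_div_4_le_card])

end

section \<open>Construction of d and r\<close>

definition least_prime_ge :: "nat \<Rightarrow> nat" where
  "least_prime_ge B = (LEAST p. Factorial_Ring.prime p \<and> B \<le> p)"

lemma least_prime_ge_spec: "Factorial_Ring.prime (least_prime_ge B) \<and> B \<le> least_prime_ge B"
proof -
  obtain p where "Factorial_Ring.prime p \<and> B < p" using bigger_prime by blast
  then have "\<exists>p. Factorial_Ring.prime p \<and> B \<le> p" by auto
  then show ?thesis unfolding least_prime_ge_def by (rule LeastI_ex)
qed

(* The k-th triple is (r(k+1), d(k), d(1) * ... * d(k)); r(k+1) is a multiple of d(1), ..., d(k)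
   and d(k) is chosen only after r(k+1), large compared to it. *)
fun rdp :: "(nat \<Rightarrow> nat) \<Rightarrow> nat \<Rightarrow> nat \<times> nat \<times> nat" where
  "rdp F 0 = (1, 0, 1)"
| "rdp F (Suc k) = (case rdp F k of (r, d, p) \<Rightarrow>
     let r' = (2 * r + 1) * p; d' = least_prime_ge (d + 3 * r' + 4 * F (12 * r' + 4) + 11)
     in (r', d', p * d'))"

definition "r_next F k = fst (rdp F k)"
definition "d_constr F k = fst (snd (rdp F k))"
definition "d_prod F k = snd (snd (rdp F k))"

lemma rdp_0: "r_next F 0 = 1" "d_constr F 0 = 0" "d_prod F 0 = 1"
  by (simp_all add: r_next_def d_constr_def d_prod_def)

lemma rdp_Suc:
  "r_next F (Suc k) = (2 * r_next F k + 1) * d_prod F k"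
  "d_constr F (Suc k) = least_prime_ge (d_constr F k + 3 * r_next F (Suc k)
      + 4 * F (12 * r_next F (Suc k) + 4) + 11)"
  "d_prod F (Suc k) = d_prod F k * d_constr F (Suc k)"
  by (simp_all add: r_next_def d_constr_def d_prod_def Let_def split: prod.splits)

lemma d_constr_Suc_ge:
  "d_constr F k + 3 * r_next F (Suc k) + 4 * F (12 * r_next F (Suc k) + 4) + 11 \<le> d_constr F (Suc k)"
  using least_prime_ge_spec rdp_Suc(2) by metis

lemma d_prod_pos: "1 \<le> d_prod F k"
proof (induction k)
  case (Suc k)
  have "1 \<le> d_constr F (Suc k)" using d_constr_Suc_ge[of F k] by simp
  then show ?case using Suc.IH by (simp add: rdp_Suc(3) one_le_mult_iff)
qed (simp add: rdp_0)

lemma d_constr_dvd_d_prod: "1 \<le> n \<Longrightarrow> n \<le> k \<Longrightarrow> d_constr F n dvd d_prod F k"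
  by (induction k) (auto simp: rdp_Suc(3) le_Suc_eq)

lemma r_next_Suc_ge: "2 * r_next F k + 1 \<le> r_next F (Suc k)"
  using mult_le_mono2[OF d_prod_pos, of "2 * r_next F k + 1" F k] by (simp add: rdp_Suc(1))

lemma strict_mono_r_next: "strict_mono (r_next F)"
  unfolding strict_mono_Suc_iff
proof
  fix k
  show "r_next F k < r_next F (Suc k)" using r_next_Suc_ge[of F k] by simp
qed

lemma r_next_ge: "Suc k \<le> r_next F k"
proof (induction k)
  case (Suc k)
  then show ?case using r_next_Suc_ge[of F k] by simp
qed (simp add: rdp_0)

definition "r_constr F n = r_next F (n - 1)"

lemma d_constr_ge_F:
  "1 \<le> n \<Longrightarrow> 3 * r_constr F (Suc n) + 4 * F (12 * r_constr F (Suc n) + 4) + 11 \<le> d_constr F n"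
  using d_constr_Suc_ge[of F "n - 1"] by (cases n) (auto simp: r_constr_def)

lemma d_constr_prime: "1 \<le> n \<Longrightarrow> Factorial_Ring.prime (d_constr F n)"
  using least_prime_ge_spec rdp_Suc(2) by (cases n) auto

lemma mono_d_constr: "mono (d_constr F)"
  unfolding mono_iff_le_Suc
proof
  fix k
  show "d_constr F k \<le> d_constr F (Suc k)" using d_constr_Suc_ge[of F k] by simp
qed

lemma r_constr_less: "1 \<le> i \<Longrightarrow> i < j \<Longrightarrow> r_constr F i < r_constr F j"
  using strict_mono_r_next by (simp add: r_constr_def strict_mono_def)

lemma r_constr_ge: "1 \<le> n \<Longrightarrow> n \<le> r_constr F n"
  using r_next_ge[of "n - 1" F] by (simp add: r_constr_def)

lemma r_constr_1: "r_constr F 1 = 1"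
  by (simp add: r_constr_def rdp_0)

lemma r_constr_Suc_ge: "1 \<le> n \<Longrightarrow> 2 * r_constr F n + 1 \<le> r_constr F (Suc n)"
  using r_next_Suc_ge[of F "n - 1"] by (cases n) (auto simp: r_constr_def)

lemma r_constr_Suc_lt_d_constr: "1 \<le> n \<Longrightarrow> 3 * r_constr F (Suc n) + 11 \<le> d_constr F n"
  using d_constr_ge_F[of n F] by simp

lemma d_constr_dvd_r_constr: "1 \<le> n \<Longrightarrow> n + 2 \<le> m \<Longrightarrow> d_constr F n dvd r_constr F m"
  using d_constr_dvd_d_prod[of n "m - 2" F] rdp_Suc(1)[of F "m - 2"]
  by (simp add: r_constr_def Suc_diff_Suc numeral_2_eq_2)

lemma Alt_prod_gens_constr: "Alt_prod_gens (d_constr F) (r_constr F)"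
proof
  fix n :: nat assume n: "1 \<le> n"
  have "r_constr F n < r_constr F (Suc n)" using r_constr_less[OF n] by simp
  then show "2 * r_constr F n + 1 \<le> d_constr F n" using r_constr_Suc_lt_d_constr[OF n, of F] by simp
  show "1 \<le> r_constr F n" using r_constr_ge[OF n, of F] n by simp
  have "2 < d_constr F n" using r_constr_Suc_lt_d_constr[OF n, of F] by simp
  then show "odd (d_constr F n)" using prime_odd_nat[OF d_constr_prime[OF n]] by blast
qed

lemma good_coordinate_constr:
  assumes m: "1 \<le> m"
  shows "good_coordinate (d_constr F) (r_constr F) m"
proof (intro good_coordinate.intro good_coordinate_axioms.intro Alt_prod_gens_constr m
    d_constr_prime)
  show "8 < d_constr F m" using r_constr_Suc_lt_d_constr[OF m, of F] by simp
  fix n assume n: "1 \<le> n" "n \<noteq> m"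
  let ?r = "r_constr F" and ?d = "d_constr F"
  consider "n + 2 \<le> m" | "Suc n = m" | "m < n" using n(2) by linarith
  then show "?d n dvd ?r m \<or> (?r m + 2 * ?r n < ?d n \<and> ?r m \<noteq> ?r n \<and> ?r m \<noteq> 2 * ?r n)"
  proof cases
    case 1
    then show ?thesis using d_constr_dvd_r_constr[OF n(1)] by simp
  next
    case 2
    then show ?thesis
      using r_constr_Suc_ge[OF n(1), of F] r_constr_Suc_lt_d_constr[OF n(1), of F] by simp
  next
    case 3
    then show ?thesis
      using r_constr_less[OF m 3, of F] r_constr_less[OF n(1), of "Suc n" F]
        r_constr_Suc_lt_d_constr[OF n(1), of F]
      by simp
  qed
qed

lemma F_le_full_rf_growth_constr:
  assumes F: "strict_mono_on {1..} F" and l: "16 \<le> l"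
  shows "F l \<le> full_rf_growth (G_grp (d_constr F) (r_constr F))
    {alpha_el (d_constr F), beta_el (r_constr F)} l"
proof -
  define Ms where "Ms = {m. 1 \<le> m \<and> 12 * r_constr F m + 4 \<le> l}"
  have "Ms \<subseteq> {..l}"
  proof
    fix k assume "k \<in> Ms"
    then show "k \<in> {..l}" using r_constr_ge[of k F] by (simp add: Ms_def)
  qed
  then have "finite Ms" by (rule finite_subset) simp
  moreover have "1 \<in> Ms" using l r_constr_1[of F] by (simp add: Ms_def)
  ultimately have "Max Ms \<in> Ms" and "Suc (Max Ms) \<notin> Ms"
    using Max_in Max_ge by (blast, metis Suc_n_not_le_n)
  then obtain m where m: "1 \<le> m" "12 * r_constr F m + 4 \<le> l"
    and l_less: "l < 12 * r_constr F (Suc m) + 4"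
    by (auto simp: Ms_def)
  interpret good_coordinate "d_constr F" "r_constr F" m by (rule good_coordinate_constr[OF m(1)])
  have "F l \<le> F (12 * r_constr F (Suc m) + 4)"
    using strict_mono_onD[OF F, of l "12 * r_constr F (Suc m) + 4"] l l_less by simp
  also have "\<dots> \<le> d_constr F m div 4" using d_constr_ge_F[OF m(1), of F] by simp
  also have "\<dots> \<le> full_rf_growth G {\<alpha>, \<beta>} l" by (rule d_div_4_le_full_rf_growth[OF m(2)])
  finally show ?thesis .
qed

theorem theorem3p14:
  "\<exists>C0::nat. C0 > 0 \<and>
     (\<forall>F :: nat \<Rightarrow> nat. strict_mono_on {1..} F \<and> (\<forall>n\<ge>1. F n \<ge> 1) \<longrightarrow>
        (\<exists>d r :: nat \<Rightarrow> nat.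
           mono_on {1..} d \<and>
           (\<forall>n\<ge>1. Factorial_Ring.prime (d n) \<and> d n \<ge> 5) \<and>
           (\<forall>n\<ge>1. d n \<ge> 2 * r n + 1 \<and> r n \<ge> n \<and> d n - 2 * r n \<ge> n \<and> 3 * r n \<le> d n) \<and>
           strict_mono_on {1..} r \<and>
           (\<forall>n\<ge>C0. full_rf_growth (G_grp d r) {alpha_el d, beta_el r} n \<ge> F n)))"
proof (intro exI[of _ "16::nat"] conjI allI impI exI)
  show "(0::nat) < 16" by simp
  show "mono_on {1..} (d_constr F)" for F
    using mono_d_constr by (rule mono_on_subset) simp
  show "Factorial_Ring.prime (d_constr F n)" "5 \<le> d_constr F n" if "1 \<le> n" for F n
    using d_constr_prime[OF that] r_constr_Suc_lt_d_constr[OF that, of F] by simp_all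
  show "2 * r_constr F n + 1 \<le> d_constr F n" "n \<le> r_constr F n" "n \<le> d_constr F n - 2 * r_constr F n"
    "3 * r_constr F n \<le> d_constr F n" if "1 \<le> n" for F n
    using r_constr_ge[OF that, of F] r_constr_less[OF that, of "Suc n" F]
      r_constr_Suc_lt_d_constr[OF that, of F]
    by simp_all
  show "strict_mono_on {1..} (r_constr F)" for F
    by (rule strict_mono_onI) (simp add: r_constr_less)
  show "F n \<le> full_rf_growth (G_grp (d_constr F) (r_constr F))
      {alpha_el (d_constr F), beta_el (r_constr F)} n"
    if "strict_mono_on {1..} F \<and> (\<forall>n\<ge>1. 1 \<le> F n)" "16 \<le> n" for F n
    using F_le_full_rf_growth_constr that by blast
qed

end
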